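(* Let $X$ and $Y$ be metric spaces and let $A(X)\subseteq C(X)$ and $A(Y)\subseteq C(Y)$ be adequate subspaces. Assume that either (a) $A(Y)=A^{\mathrm{loc}}(Y)$ or $A(Y)=A^{\mathrm{loc}}_b(Y)$, or (b) $Y$ is complete and for every separated sequence $(y_n)$ in $Y$ there exists $g\in A(Y)$ with $g(y_{2n})=1$ and $g(y_{2n-1})=0$ for all $n$. If $h:\mathcal{A}X\to\mathcal{A}Y$ is a homeomorphism and $x_0\in X$, then $h(x_0)\in Y$.
   Context: All functions are real-valued. $A(X)\subseteq C(X)$ separates points from closed sets if for every $x\in X$ and closed $F\not\ni x$ there is $f\in A(X)$ with $f(x)=1$, $f=0$ on $F$. $A(X)$ is adequate if (a) it separates points from closed sets and contains the constants; (b) there is a continuous nondecreasing $g:\mathbb{R}\to\mathbb{R}$ with $g(t)=0$ for $t\le0$, $g(t)=1$ for $t\ge1$, and $g\circ f\in A(X)$ for all $f\in A(X)$; (c) every $f\in A(X)$ is a difference of two nonnegative elements of $A(X)$. $A^{\mathrm{loc}}(Y)$ is the space of real functions $f$ on $Y$ such that every $y_0\in Y$ has a neighborhood $U$ and some $g\in A(Y)$ with $f=g$ on $U$; $A^{\mathrm{loc}}_b(Y)$ is its subspace of bounded functions. A sequence (set of points) in a metric space is separated if there is $\varepsilon>0$ with $d(y,y')\ge\varepsilon$ for any two distinct points $y,y'$ of it. The $A(X)$-compactification $\mathcal{A}X$ is the closure of $i(X)$ in $[-\infty,\infty]^{A(X)}$ (product of order topologies), $i(x)(\varphi)=\varphi(x)$,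 with $X$ identified with $i(X)$; $\mathcal{A}Y$ is defined analogously. *)

theory Defs
  imports "HOL-Analysis.Analysis" "HOL-Library.Extended_Real"
begin

text \<open>The space X is the whole carrier of a type of class metric_space;
  functions on X are functions of type 'a \<Rightarrow> real.\<close>

definition lin_subspace_fun :: "('a \<Rightarrow> real) set \<Rightarrow> bool" where
  "lin_subspace_fun A \<longleftrightarrow> (\<lambda>_. 0) \<in> A \<and>
     (\<forall>f\<in>A. \<forall>g\<in>A. (\<lambda>x. f x + g x) \<in> A) \<and>
     (\<forall>c::real. \<forall>f\<in>A. (\<lambda>x. c * f x) \<in> A)"

definition separates_points_closed :: "('a::topological_space \<Rightarrow> real) set \<Rightarrow> bool" where
  "separates_points_closed A \<longleftrightarrow>
     (\<forall>x F. closed F \<and> x \<notin> F \<longrightarrow> (\<exists>f\<in>A. f x = 1 \<and> (\<forall>z\<in>F. f z = 0)))"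

definition adequate :: "('a::topological_space \<Rightarrow> real) set \<Rightarrow> bool" where
  "adequate A \<longleftrightarrow>
     lin_subspace_fun A \<and> (\<forall>f\<in>A. continuous_on UNIV f) \<and>
     separates_points_closed A \<and> (\<forall>c. (\<lambda>_. c) \<in> A) \<and>
     (\<exists>g::real \<Rightarrow> real. continuous_on UNIV g \<and> mono g \<and>
        (\<forall>t\<le>0. g t = 0) \<and> (\<forall>t\<ge>1. g t = 1) \<and> (\<forall>f\<in>A. g \<circ> f \<in> A)) \<and>
     (\<forall>f\<in>A. \<exists>f1\<in>A. \<exists>f2\<in>A. (\<forall>x. f1 x \<ge> 0) \<and> (\<forall>x. f2 x \<ge> 0) \<and>
        f = (\<lambda>x. f1 x - f2 x))"

definition Aloc :: "('a::topological_space \<Rightarrow> real) set \<Rightarrow> ('a \<Rightarrow> real) set" where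
  "Aloc A = {f. \<forall>y0. \<exists>U. open U \<and> y0 \<in> U \<and> (\<exists>g\<in>A. \<forall>z\<in>U. f z = g z)}"

definition Aloc_b :: "('a::topological_space \<Rightarrow> real) set \<Rightarrow> ('a \<Rightarrow> real) set" where
  "Aloc_b A = {f \<in> Aloc A. bounded (range f)}"

definition separated_seq :: "(nat \<Rightarrow> 'a::metric_space) \<Rightarrow> bool" where
  "separated_seq y \<longleftrightarrow> (\<exists>e>0. \<forall>m n. m \<noteq> n \<longrightarrow> dist (y m) (y n) \<ge> e)"

definition evalmap :: "('a \<Rightarrow> real) set \<Rightarrow> 'a \<Rightarrow> (('a \<Rightarrow> real) \<Rightarrow> ereal)" where
  "evalmap A x = (\<lambda>\<phi>\<in>A. ereal (\<phi> x))"

definition ambient_top :: "('a \<Rightarrow> real) set \<Rightarrow> (('a \<Rightarrow> real) \<Rightarrow> ereal) topology" where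
  "ambient_top A = product_topology (\<lambda>_. (euclidean :: ereal topology)) A"

text \<open>The A(X)-compactification as a topological space: closure of i(X) with the subspace topology.\<close>
definition Acomp :: "('a \<Rightarrow> real) set \<Rightarrow> (('a \<Rightarrow> real) \<Rightarrow> ereal) topology" where
  "Acomp A = subtopology (ambient_top A) ((ambient_top A) closure_of (evalmap A ` UNIV))"

end

theory Submission
  imports Defs
begin

text \<open>
  In the compactification, a point x0 of X has a decreasing sequence of closed neighbourhoods
  whose intersection is the point itself: they are cut out by bump functions of A(X) supported
  in the balls of radius 1/(n+1) around x0. This property is topological, so h transports it.
  Conversely, let p be a point of the remainder of the compactification of Y with this property.
  Choosing y n in the n-th neighbourhood, compactness forces \<phi>(y n) \<rightarrow> p(\<phi>) for every
  \<phi> in A(Y), and the sequence has no cluster point in Y, since a cluster point z would give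
  p = z. Hence some subsequence is either discrete with isolated values (in case (a) a locally
  finite sum of bump functions, truncated by the function g of adequacy, lies in A(Y)) or
  separated (in case (b), by completeness). In both cases a function of A(Y) takes the values
  0 and 1 alternately along the subsequence, contradicting the convergence of its values.
\<close>

section \<open>Limits, closures and nests of closed sets\<close>

lemma filterlim_sequentially_inj:
  fixes s :: "nat \<Rightarrow> nat"
  assumes "inj s"
  shows "filterlim s sequentially sequentially"
proof -
  have "finite {n. \<not> N \<le> s n}" for N
    using finite_vimageI[OF finite_lessThan[of N] assms] by (simp add: vimage_def not_le)
  then have "\<forall>\<^sub>F n in cofinite. N \<le> s n" for N
    by (simp add: eventually_cofinite)
  then show ?thesis
    by (simp add: filterlim_at_top cofinite_eq_sequentially)
qed

lemma LIMSEQ_inj_subseq_alternating_eq: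
  fixes X :: "nat \<Rightarrow> 'a::t2_space" and s :: "nat \<Rightarrow> nat"
  assumes "X \<longlonglongrightarrow> l" and "inj s"
    and even: "\<And>j. X (s (2*j)) = a" and odd: "\<And>j. X (s (2*j+1)) = b"
  shows "a = b"
proof -
  have Xs: "(X \<circ> s) \<longlonglongrightarrow> l"
    using filterlim_compose[OF assms(1) filterlim_sequentially_inj[OF assms(2)]] by (simp add: o_def)
  have "strict_mono (\<lambda>j::nat. 2*j)" "strict_mono (\<lambda>j::nat. 2*j+1)"
    by (auto simp: strict_mono_def)
  from this[THEN LIMSEQ_subseq_LIMSEQ[OF Xs]]
  have "(\<lambda>j. a) \<longlonglongrightarrow> l" "(\<lambda>j. b) \<longlonglongrightarrow> l"
    by (simp_all add: o_def even odd[simplified])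
  then show "a = b" using LIMSEQ_unique by (metis tendsto_const)
qed

lemma limitin_closed_nest:
  fixes C :: "nat \<Rightarrow> 'a set"
  assumes "compact_space X" and closed: "\<And>n. closedin X (C n)" and "decseq C"
    and "p \<in> topspace X" and unique: "\<And>r. r \<in> topspace X \<Longrightarrow> (\<And>n. r \<in> C n) \<Longrightarrow> r = p"
    and x: "\<And>n. x n \<in> C n"
  shows "limitin X x p sequentially"
  unfolding limitin_def
proof (intro conjI allI impI)
  show "p \<in> topspace X" by fact
  fix U assume U: "openin X U \<and> p \<in> U"
  have "\<not> (\<forall>n. C n - U \<noteq> {})"
  proof
    assume nonempty: "\<forall>n. C n - U \<noteq> {}"
    have "closedin X (C n - U)" for n using closed U by (simp add: closedin_diff)
    moreover have "decseq (\<lambda>n. C n - U)" using \<open>decseq C\<close> by (auto simp: decseq_def)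
    ultimately have "(\<Inter>n. C n - U) \<noteq> {}"
      using nonempty by (intro compact_space_imp_nest[OF \<open>compact_space X\<close>]) auto
    then obtain r where r: "\<And>n. r \<in> C n" "r \<notin> U" by blast
    moreover have "r \<in> topspace X" using closedin_subset[OF closed] r(1) by blast
    ultimately show False using unique U by blast
  qed
  then obtain N where N: "C N \<subseteq> U" by blast
  have "x n \<in> U" if "n \<ge> N" for n
    using x[of n] decseqD[OF \<open>decseq C\<close> that] N by blast
  then show "\<forall>\<^sub>F n in sequentially. x n \<in> U"
    unfolding eventually_sequentially by blast
qed

lemma limit_in_closure_balls_image:
  fixes f :: "'a::metric_space \<Rightarrow> 'b::t2_space"
  assumes "isCont f x0" and "\<And>\<delta>. \<delta> > 0 \<Longrightarrow> l \<in> closure (f ` ball x0 \<delta>)"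
  shows "l = f x0"
proof (rule ccontr)
  assume "l \<noteq> f x0"
  then obtain N M where NM: "open N" "open M" "l \<in> N" "f x0 \<in> M" "N \<inter> M = {}"
    by (metis hausdorff)
  have "\<forall>\<^sub>F x in at x0. f x \<in> M"
    using assms(1) NM(2,4) unfolding isCont_def by (rule topological_tendstoD)
  then obtain \<delta> where "\<delta> > 0" and \<delta>: "\<And>x. x \<noteq> x0 \<Longrightarrow> dist x x0 < \<delta> \<Longrightarrow> f x \<in> M"
    unfolding eventually_at by blast
  have "f ` ball x0 \<delta> \<subseteq> M"
    using \<delta> NM(4) by (force simp: dist_commute)
  then have "l \<in> closure M"
    using assms(2)[OF \<open>\<delta> > 0\<close>] closure_mono by blast
  then show False
    using open_Int_closure_eq_empty[OF NM(1), of M] NM(3,5) by blast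
qed

definition closed_nbhd_nest :: "'a topology \<Rightarrow> 'a \<Rightarrow> bool" where
  "closed_nbhd_nest X p \<longleftrightarrow> (\<exists>C::nat \<Rightarrow> 'a set. decseq C \<and>
     (\<forall>n. closedin X (C n) \<and> p \<in> X interior_of C n) \<and>
     (\<forall>r\<in>topspace X. (\<forall>n. r \<in> C n) \<longrightarrow> r = p))"

lemma homeomorphic_map_closed_nbhd_nest:
  assumes hom: "homeomorphic_map X Y h" and "closed_nbhd_nest X p"
  shows "closed_nbhd_nest Y (h p)"
proof -
  obtain C where "decseq C" and C: "\<And>n. closedin X (C n)" "\<And>n. p \<in> X interior_of C n"
    and unique: "\<And>r. r \<in> topspace X \<Longrightarrow> \<forall>n. r \<in> C n \<Longrightarrow> r = p"
    using assms(2) unfolding closed_nbhd_nest_def by blast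
  have sub: "C n \<subseteq> topspace X" for n using C(1) closedin_subset by blast
  have inj: "inj_on h (topspace X)" and surj: "h ` topspace X = topspace Y"
    using hom homeomorphic_imp_injective_map homeomorphic_imp_surjective_map by blast+
  have "decseq (\<lambda>n. h ` C n)" using \<open>decseq C\<close> by (auto simp: decseq_def)
  moreover have "closedin Y (h ` C n)" for n using homeomorphic_map_closedness[OF hom sub] C(1) by blast
  moreover have "h p \<in> Y interior_of (h ` C n)" for n
    using homeomorphic_map_interior_of[OF hom sub] C(2) by blast
  moreover have "r = h p" if "r \<in> topspace Y" and r: "\<forall>n. r \<in> h ` C n" for r
  proof -
    obtain q where q: "q \<in> topspace X" "r = h q" using surj \<open>r \<in> topspace Y\<close> by blast
    have "q \<in> C n" for n
    proof -
      obtain q' where "q' \<in> C n" and "r = h q'" using r by blast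
      then have "h q' = h q" "q' \<in> topspace X" using q sub by auto
      then have "q' = q" using inj_onD[OF inj] q(1) by blast
      then show ?thesis using \<open>q' \<in> C n\<close> by simp
    qed
    then show ?thesis using unique q by blast
  qed
  ultimately show ?thesis unfolding closed_nbhd_nest_def by blast
qed

section \<open>Adequate function spaces\<close>

lemma adequate_continuous: "adequate A \<Longrightarrow> f \<in> A \<Longrightarrow> continuous_on UNIV f"
  unfolding adequate_def by blast

lemma adequate_bump:
  fixes A :: "('a::metric_space \<Rightarrow> real) set"
  assumes "adequate A" and "r > 0"
  shows "\<exists>f\<in>A. f x = 1 \<and> (\<forall>z. z \<notin> ball x r \<longrightarrow> f z = 0)"
proof -
  have "separates_points_closed A" using assms(1) unfolding adequate_def by blast
  moreover have "closed (- ball x r) \<and> x \<notin> - ball x r" using assms(2) by auto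
  ultimately obtain f where "f \<in> A" "f x = 1" "\<forall>z\<in>- ball x r. f z = 0"
    unfolding separates_points_closed_def by blast
  then show ?thesis by auto
qed

lemma adequate_sum:
  assumes "adequate A" and "finite F" and "\<And>m. m \<in> F \<Longrightarrow> f m \<in> A"
  shows "(\<lambda>x. \<Sum>m\<in>F. f m x) \<in> A"
proof -
  have zero: "(\<lambda>_. 0) \<in> A" and add: "\<And>g h. g \<in> A \<Longrightarrow> h \<in> A \<Longrightarrow> (\<lambda>x. g x + h x) \<in> A"
    using assms(1) unfolding adequate_def lin_subspace_fun_def by blast+
  from assms(2,3) show ?thesis
  proof (induction F rule: finite_induct)
    case (insert a F)
    then show ?case using add[of "f a" "\<lambda>x. \<Sum>m\<in>F. f m x"] by simp
  qed (simp add: zero)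
qed

lemma adequate_truncation:
  assumes "adequate A"
  obtains G :: "real \<Rightarrow> real" where "\<And>t. G t \<in> {0..1}" "G 0 = 0" "G 1 = 1"
    "\<And>f. f \<in> A \<Longrightarrow> G \<circ> f \<in> A"
proof -
  obtain G :: "real \<Rightarrow> real" where "mono G" and G0: "\<forall>t\<le>0. G t = 0" and G1: "\<forall>t\<ge>1. G t = 1"
    and GA: "\<forall>f\<in>A. G \<circ> f \<in> A"
    using assms unfolding adequate_def by blast
  have "G t \<in> {0..1}" for t
    using monoD[OF \<open>mono G\<close>, of "min t 0" t] monoD[OF \<open>mono G\<close>, of t "max t 1"] G0 G1
    by (simp add: min_def max_def split: if_splits)
  then show ?thesis using G0 G1 GA by (intro that[of G]) auto
qed

section \<open>The compactification\<close>

lemma topspace_Acomp: "topspace (Acomp A) = ambient_top A closure_of range (evalmap A)"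
  unfolding Acomp_def by (simp add: closure_of_subset_topspace inf.absorb2)

lemma evalmap_in_topspace_Acomp: "evalmap A x \<in> topspace (Acomp A)"
proof -
  have "range (evalmap A) \<subseteq> topspace (ambient_top A)"
    by (auto simp: evalmap_def ambient_top_def)
  then show ?thesis unfolding topspace_Acomp using closure_of_subset by blast
qed

lemma topspace_Acomp_extensional: "q \<in> topspace (Acomp A) \<Longrightarrow> q \<in> extensional A"
  unfolding Acomp_def ambient_top_def by (auto simp: PiE_def)

lemma continuous_map_Acomp_eval:
  "\<phi> \<in> A \<Longrightarrow> continuous_map (Acomp A) euclidean (\<lambda>q. q \<phi>)"
  unfolding Acomp_def ambient_top_def
  by (intro continuous_map_from_subtopology continuous_map_product_projection)

lemma compact_space_Acomp: "compact_space (Acomp A)"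
proof -
  have "compact_space (ambient_top A)"
    unfolding ambient_top_def compact_space_product_topology
    by (simp add: compact_space_def compact_UNIV)
  then show ?thesis
    unfolding Acomp_def by (intro compact_space_subtopology closedin_compact_space closedin_closure_of)
qed

lemma Acomp_evalmap_dense:
  assumes "openin (Acomp A) U" and "q \<in> U"
  obtains x where "evalmap A x \<in> U"
proof -
  obtain V where V: "openin (ambient_top A) V" "U = V \<inter> ambient_top A closure_of range (evalmap A)"
    using assms(1) unfolding Acomp_def openin_subtopology by blast
  then have "q \<in> ambient_top A closure_of range (evalmap A)" "q \<in> V" using assms(2) by auto
  then obtain x where "evalmap A x \<in> V"
    using V(1) unfolding in_closure_of by blast
  then have "evalmap A x \<in> U"
    using V(2) evalmap_in_topspace_Acomp[of A x] unfolding topspace_Acomp by blast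
  then show ?thesis by (rule that)
qed

lemma Acomp_eq_evalmap_if_in_closure_balls:
  fixes A :: "('a::metric_space \<Rightarrow> real) set"
  assumes cont: "\<And>\<phi>. \<phi> \<in> A \<Longrightarrow> continuous_on UNIV \<phi>" and "q \<in> topspace (Acomp A)"
    and closure: "\<And>\<delta>. \<delta> > 0 \<Longrightarrow> q \<in> Acomp A closure_of (evalmap A ` ball x0 \<delta>)"
  shows "q = evalmap A x0"
proof (rule extensionalityI)
  show "q \<in> extensional A" using assms(2) by (rule topspace_Acomp_extensional)
  show "evalmap A x0 \<in> extensional A" by (simp add: evalmap_def)
  fix \<phi> assume "\<phi> \<in> A"
  have "isCont (\<lambda>x. ereal (\<phi> x)) x0"
    using cont[OF \<open>\<phi> \<in> A\<close>] by (intro continuous_intros) (simp add: continuous_on_eq_continuous_at)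
  moreover have "q \<phi> \<in> closure ((\<lambda>x. ereal (\<phi> x)) ` ball x0 \<delta>)" if "\<delta> > 0" for \<delta>
  proof -
    have "(\<lambda>q. q \<phi>) ` (Acomp A closure_of (evalmap A ` ball x0 \<delta>))
            \<subseteq> euclidean closure_of ((\<lambda>q. q \<phi>) ` evalmap A ` ball x0 \<delta>)"
      by (rule continuous_map_image_closure_subset[OF continuous_map_Acomp_eval[OF \<open>\<phi> \<in> A\<close>]])
    moreover have "(\<lambda>q. q \<phi>) ` evalmap A ` ball x0 \<delta> = (\<lambda>x. ereal (\<phi> x)) ` ball x0 \<delta>"
      using \<open>\<phi> \<in> A\<close> by (auto simp: evalmap_def image_image)
    ultimately show ?thesis using closure[OF that] by auto
  qed
  ultimately have "q \<phi> = ereal (\<phi> x0)" by (rule limit_in_closure_balls_image)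
  then show "q \<phi> = evalmap A x0 \<phi>" using \<open>\<phi> \<in> A\<close> by (simp add: evalmap_def)
qed

lemma Acomp_eq_evalmap_if_bumps_positive:
  fixes A :: "('a::metric_space \<Rightarrow> real) set"
  assumes "adequate A" and fA: "\<And>n. f n \<in> A"
    and f0: "\<And>n z. z \<notin> ball x0 (1 / Suc n) \<Longrightarrow> f n z = 0"
    and "r \<in> topspace (Acomp A)" and pos: "\<And>n. ereal 0 < r (f n)"
  shows "r = evalmap A x0"
proof (rule Acomp_eq_evalmap_if_in_closure_balls)
  show "continuous_on UNIV \<phi>" if "\<phi> \<in> A" for \<phi> using adequate_continuous assms(1) that .
  fix \<delta> :: real assume "\<delta> > 0"
  then obtain n :: nat where n: "1 / Suc n < \<delta>" using nat_approx_posE by blast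
  show "r \<in> Acomp A closure_of (evalmap A ` ball x0 \<delta>)"
    unfolding in_closure_of
  proof (intro conjI allI impI)
    fix U assume U: "r \<in> U \<and> openin (Acomp A) U"
    let ?W = "U \<inter> {q \<in> topspace (Acomp A). q (f n) \<in> {ereal 0<..}}"
    have "openin (Acomp A) ?W"
      using U by (intro openin_Int openin_continuous_map_preimage[OF continuous_map_Acomp_eval[OF fA]]) auto
    moreover have "r \<in> ?W" using U pos[of n] \<open>r \<in> topspace (Acomp A)\<close> by blast
    ultimately obtain x where x: "evalmap A x \<in> ?W" by (rule Acomp_evalmap_dense)
    then have "f n x \<noteq> 0" using fA by (auto simp: evalmap_def)
    then have "dist x0 x < 1 / Suc n" using f0[of x n] by auto
    then have "x \<in> ball x0 \<delta>" using n by simp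
    then show "\<exists>y. y \<in> evalmap A ` ball x0 \<delta> \<and> y \<in> U" using x by blast
  qed (use \<open>r \<in> topspace (Acomp A)\<close> in blast)
qed fact

lemma closed_nbhd_nest_evalmap:
  fixes A :: "('a::metric_space \<Rightarrow> real) set"
  assumes "adequate A"
  shows "closed_nbhd_nest (Acomp A) (evalmap A x0)"
proof -
  let ?T = "Acomp A"
  have "\<forall>n. \<exists>f. f \<in> A \<and> f x0 = 1 \<and> (\<forall>z. z \<notin> ball x0 (1 / Suc n) \<longrightarrow> f z = 0)"
  proof
    fix n
    have "1 / Suc n > (0::real)" by simp
    from adequate_bump[OF assms this]
    show "\<exists>f. f \<in> A \<and> f x0 = 1 \<and> (\<forall>z. z \<notin> ball x0 (1 / Suc n) \<longrightarrow> f z = 0)" by blast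
  qed
  then obtain f where f: "\<forall>n. f n \<in> A \<and> f n x0 = 1 \<and> (\<forall>z. z \<notin> ball x0 (1 / Suc n) \<longrightarrow> f n z = 0)"
    by (rule choice[THEN exE])
  then have fA: "\<And>n. f n \<in> A" and f1: "\<And>n. f n x0 = 1"
    and f0: "\<And>n z. z \<notin> ball x0 (1 / Suc n) \<Longrightarrow> f n z = 0"
    by simp_all
  define C where "C n = (\<Inter>k\<le>n. {q \<in> topspace ?T. q (f k) \<in> {ereal (1/2)..}})" for n
  define V where "V n = (\<Inter>k\<le>n. {q \<in> topspace ?T. q (f k) \<in> {ereal (1/2)<..}})" for n
  have "decseq C" unfolding C_def decseq_def by auto
  moreover have "closedin ?T (C n)" for n
    unfolding C_def
    by (intro closedin_INT closedin_continuous_map_preimage[OF continuous_map_Acomp_eval[OF fA]]) auto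
  moreover have "evalmap A x0 \<in> ?T interior_of C n" for n
  proof -
    have "openin ?T (V n)"
      unfolding V_def
      by (intro openin_INT2 openin_continuous_map_preimage[OF continuous_map_Acomp_eval[OF fA]]) auto
    moreover have "V n \<subseteq> C n" unfolding V_def C_def by (auto intro: less_imp_le)
    moreover have "evalmap A x0 \<in> V n"
      unfolding V_def using evalmap_in_topspace_Acomp[of A x0] fA f1 by (simp add: evalmap_def)
    ultimately show ?thesis using interior_of_maximal by blast
  qed
  moreover have "r = evalmap A x0" if r: "r \<in> topspace ?T" "\<forall>n. r \<in> C n" for r
  proof (rule Acomp_eq_evalmap_if_bumps_positive[OF assms fA f0 r(1)])
    fix n
    have "ereal (1/2) \<le> r (f n)" using r(2) unfolding C_def by blast
    then show "ereal 0 < r (f n)" by (rule less_le_trans[rotated]) simp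
  qed
  ultimately show ?thesis unfolding closed_nbhd_nest_def by blast
qed

section \<open>Sequences without cluster points\<close>

lemma greedy_subseq:
  assumes "\<And>K. finite K \<Longrightarrow> \<exists>n. \<forall>a\<in>K. R a (y n)"
  shows "\<exists>s::nat \<Rightarrow> nat. \<forall>m k. m < k \<longrightarrow> R (y (s m)) (y (s k))"
proof -
  define next_index where "next_index K = (SOME n. \<forall>a\<in>K. R a (y n))" for K
  define chosen where "chosen = rec_nat {} (\<lambda>_ K. insert (y (next_index K)) K)"
  define s where "s k = next_index (chosen k)" for k
  have chosen_eq: "chosen k = y ` s ` {..<k}" for k
    by (induction k) (simp_all add: chosen_def s_def lessThan_Suc)
  have "finite (chosen k)" for k by (simp add: chosen_eq)
  then have R: "\<forall>a\<in>chosen k. R a (y (s k))" for k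
    unfolding s_def next_index_def by (rule someI_ex[OF assms])
  have "R (y (s m)) (y (s k))" if "m < k" for m k
    using R[of k] that unfolding chosen_eq by blast
  then show ?thesis by blast
qed

definition locally_finite_seq :: "(nat \<Rightarrow> 'a::metric_space) \<Rightarrow> bool" where
  "locally_finite_seq y \<longleftrightarrow> (\<forall>z. \<exists>\<delta>>0. finite {n. y n \<in> ball z \<delta>})"

lemma locally_finite_seq_compact:
  assumes "locally_finite_seq y" and "compact S"
  shows "finite {n. y n \<in> S}"
proof -
  obtain d where d: "\<And>z. d z > 0" "\<And>z. finite {n. y n \<in> ball z (d z)}"
    using assms(1) unfolding locally_finite_seq_def by metis
  have "S \<subseteq> (\<Union>z\<in>S. ball z (d z))" using d(1) by auto
  then obtain K where "finite K" and cover: "S \<subseteq> (\<Union>z\<in>K. ball z (d z))"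
    by (rule compactE_image[OF assms(2) open_ball])
  then have "{n. y n \<in> S} \<subseteq> (\<Union>z\<in>K. {n. y n \<in> ball z (d z)})" by blast
  moreover have "finite (\<Union>z\<in>K. {n. y n \<in> ball z (d z)})" using \<open>finite K\<close> d(2) by blast
  ultimately show ?thesis by (rule finite_subset)
qed

lemma locally_finite_seq_reindex:
  assumes "locally_finite_seq y" and "inj s"
  shows "locally_finite_seq (y \<circ> s)"
  unfolding locally_finite_seq_def
proof
  fix z
  obtain \<delta> where "\<delta> > 0" "finite {n. y n \<in> ball z \<delta>}"
    using assms(1) unfolding locally_finite_seq_def by blast
  moreover have "{n. (y \<circ> s) n \<in> ball z \<delta>} = s -` {n. y n \<in> ball z \<delta>}" by auto
  ultimately show "\<exists>\<delta>>0. finite {n. (y \<circ> s) n \<in> ball z \<delta>}"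
    using finite_vimageI[OF _ assms(2)] by metis
qed

lemma locally_finite_seq_inj_subseq:
  assumes "locally_finite_seq y"
  obtains s :: "nat \<Rightarrow> nat" where "inj s" "inj (y \<circ> s)"
proof -
  have new: "\<exists>n. \<forall>a\<in>K. a \<noteq> y n" if "finite K" for K
  proof -
    have "finite {n. y n \<in> K}"
      using locally_finite_seq_compact[OF assms finite_imp_compact[OF that]] .
    then obtain n where "n \<notin> {n. y n \<in> K}" using infinite_UNIV_nat by (metis ex_new_if_finite)
    then show ?thesis by auto
  qed
  obtain s :: "nat \<Rightarrow> nat" where s: "\<forall>m k. m < k \<longrightarrow> y (s m) \<noteq> y (s k)"
    using greedy_subseq[where R="(\<noteq>)", OF new] by blast
  have "inj (y \<circ> s)"
  proof (rule injI)
    fix m k assume "(y \<circ> s) m = (y \<circ> s) k"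
    then show "m = k" using s by (cases m k rule: linorder_cases) (auto dest: sym)
  qed
  then show ?thesis using that inj_on_imageI2 by blast
qed

lemma locally_finite_seq_isolated:
  fixes t :: "nat \<Rightarrow> 'a::metric_space"
  assumes "inj t" and "locally_finite_seq t"
  shows "\<exists>\<epsilon>>0. \<forall>j. j \<noteq> m \<longrightarrow> \<epsilon> \<le> dist (t m) (t j)"
proof -
  obtain \<delta> where "\<delta> > 0" and "finite {j. t j \<in> ball (t m) \<delta>}"
    using assms(2) unfolding locally_finite_seq_def by blast
  then have "finite (t ` {j. t j \<in> ball (t m) \<delta>})" by simp
  from finite_set_avoid[OF this, of "t m"]
  obtain d where "d > 0" and d: "\<forall>x\<in>t ` {j. t j \<in> ball (t m) \<delta>}. x \<noteq> t m \<longrightarrow> d \<le> dist (t m) x"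
    by blast
  have "min d \<delta> \<le> dist (t m) (t j)" if "j \<noteq> m" for j
  proof (cases "t j \<in> ball (t m) \<delta>")
    case True
    moreover have "t j \<noteq> t m" using that injD[OF assms(1)] by blast
    ultimately show ?thesis using d by auto
  qed auto
  then show ?thesis using \<open>d > 0\<close> \<open>\<delta> > 0\<close> by (intro exI[of _ "min d \<delta>"]) auto
qed

lemma compact_closure_if_finite_ball_covers:
  fixes S :: "'a::metric_space set"
  assumes "complete (UNIV :: 'a set)"
    and covers: "\<And>e. e > 0 \<Longrightarrow> \<exists>K. finite K \<and> S \<subseteq> (\<Union>x\<in>K. ball x e)"
  shows "compact (closure S)"
  unfolding compact_eq_totally_bounded
proof (intro conjI allI impI)
  show "complete (closure S)" using complete_closed_subset[OF closed_closure subset_UNIV assms(1)] .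
  fix e :: real assume "e > 0"
  then obtain K where K: "finite K" "S \<subseteq> (\<Union>x\<in>K. ball x (e/2))" using covers[of "e/2"] by auto
  have "closure S \<subseteq> (\<Union>x\<in>K. ball x e)"
  proof
    fix x assume "x \<in> closure S"
    then obtain w where "w \<in> S" "dist w x < e/2"
      using \<open>e > 0\<close> unfolding closure_approachable by (meson half_gt_zero)
    moreover obtain k where "k \<in> K" "dist k w < e/2" using K(2) \<open>w \<in> S\<close> by auto
    ultimately have "dist k x < e" using dist_triangle[of k x w] by linarith
    then show "x \<in> (\<Union>x\<in>K. ball x e)" using \<open>k \<in> K\<close> by auto
  qed
  then show "\<exists>K. finite K \<and> closure S \<subseteq> (\<Union>x\<in>K. ball x e)" using K(1) by blast
qed

lemma locally_finite_seq_separated_subseq: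
  fixes y :: "nat \<Rightarrow> 'a::metric_space"
  assumes "complete (UNIV :: 'a set)" and "locally_finite_seq y"
  obtains s :: "nat \<Rightarrow> nat" where "inj s" "separated_seq (y \<circ> s)"
proof -
  have "\<exists>e>0. \<forall>K. finite K \<longrightarrow> (\<exists>n. \<forall>a\<in>K. e \<le> dist a (y n))"
  proof (rule ccontr)
    assume no_e: "\<not> ?thesis"
    have "\<exists>K. finite K \<and> range y \<subseteq> (\<Union>x\<in>K. ball x e)" if "e > 0" for e
    proof -
      have "\<exists>K. finite K \<and> (\<forall>n. \<exists>a\<in>K. dist a (y n) < e)"
        using no_e that by (simp add: not_le)
      then obtain K where "finite K" "\<forall>n. \<exists>a\<in>K. dist a (y n) < e" by blast
      then show ?thesis by (intro exI[of _ K]) auto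
    qed
    then have "compact (closure (range y))"
      by (rule compact_closure_if_finite_ball_covers[OF assms(1)])
    then have "finite {n. y n \<in> closure (range y)}"
      by (rule locally_finite_seq_compact[OF assms(2)])
    moreover have "{n. y n \<in> closure (range y)} = UNIV" by (auto intro: closure_subset[THEN subsetD])
    ultimately show False by simp
  qed
  then obtain e where "e > 0" and far: "\<And>K. finite K \<Longrightarrow> \<exists>n. \<forall>a\<in>K. e \<le> dist a (y n)"
    by auto
  obtain s :: "nat \<Rightarrow> nat" where s: "\<forall>m k. m < k \<longrightarrow> e \<le> dist (y (s m)) (y (s k))"
    using greedy_subseq[where R="\<lambda>a v. e \<le> dist a v", OF far] by blast
  have sep: "e \<le> dist (y (s m)) (y (s k))" if "m \<noteq> k" for m k
  proof (cases "m < k")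
    case False
    then have "e \<le> dist (y (s k)) (y (s m))" using that s by auto
    then show ?thesis by (simp add: dist_commute)
  qed (use s in blast)
  have "inj s"
  proof (rule injI)
    fix m k assume "s m = s k"
    then show "m = k" using sep[of m k] \<open>e > 0\<close> by (cases "m = k") auto
  qed
  moreover have "separated_seq (y \<circ> s)"
    unfolding separated_seq_def using \<open>e > 0\<close> sep by auto
  ultimately show ?thesis by (rule that)
qed

section \<open>Functions alternating along a subsequence\<close>

text \<open>A ball of radius at most 1/(m+1) meets a small ball around z only if its centre is near z
  or its index m is small; so the shrinking radii make the family of balls locally finite.\<close>

lemma locally_finite_shrinking_balls:
  fixes t :: "nat \<Rightarrow> 'a::metric_space"
  assumes "locally_finite_seq t" and r: "\<And>m. r m \<le> 1 / Suc m"
  obtains \<delta> where "\<delta> > 0" "finite {m. ball z \<delta> \<inter> ball (t m) (r m) \<noteq> {}}"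
proof -
  obtain \<delta> where "\<delta> > 0" and fin: "finite {m. t m \<in> ball z \<delta>}"
    using assms(1) unfolding locally_finite_seq_def by blast
  obtain N :: nat where N: "2 / \<delta> < N" using reals_Archimedean2 by blast
  have "{m. ball z (\<delta>/2) \<inter> ball (t m) (r m) \<noteq> {}} \<subseteq> {m. t m \<in> ball z \<delta>} \<union> {..N}"
  proof
    fix m assume "m \<in> {m. ball z (\<delta>/2) \<inter> ball (t m) (r m) \<noteq> {}}"
    then obtain x where "dist z x < \<delta>/2" "dist (t m) x < r m" by auto
    show "m \<in> {m. t m \<in> ball z \<delta>} \<union> {..N}"
    proof (cases "r m < \<delta>/2")
      case True
      then have "dist z (t m) < \<delta>"
        using \<open>dist z x < \<delta>/2\<close> \<open>dist (t m) x < r m\<close> dist_triangle[of z "t m" x]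
        by (simp add: dist_commute)
      then show ?thesis by simp
    next
      case False
      then have "\<delta>/2 \<le> 1 / Suc m" using r[of m] by linarith
      then have "real (Suc m) * \<delta> \<le> 2" by (simp add: field_simps)
      moreover have "2 < real N * \<delta>" using N \<open>\<delta> > 0\<close> by (simp add: field_simps)
      ultimately have "real (Suc m) * \<delta> < real N * \<delta>" by linarith
      then have "real (Suc m) < real N" using \<open>\<delta> > 0\<close> by simp
      then show ?thesis by simp
    qed
  qed
  then have "finite {m. ball z (\<delta>/2) \<inter> ball (t m) (r m) \<noteq> {}}"
    using fin by (rule finite_subset[OF _ finite_UnI[OF _ finite_atMost]])
  then show ?thesis using \<open>\<delta> > 0\<close> by (intro that[of "\<delta>/2"]) auto
qed

lemma Aloc_locally_finite_sum:
  fixes A :: "('a::metric_space \<Rightarrow> real) set" and t :: "nat \<Rightarrow> 'a"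
  assumes "adequate A" and "locally_finite_seq t" and r: "\<And>m. r m \<le> 1 / Suc m"
    and fA: "\<And>m. f m \<in> A" and f0: "\<And>m x. x \<notin> ball (t m) (r m) \<Longrightarrow> f m x = 0"
    and GA: "\<And>h. h \<in> A \<Longrightarrow> G \<circ> h \<in> A"
  shows "(\<lambda>x. G (\<Sum>m\<in>{m. P m \<and> x \<in> ball (t m) (r m)}. f m x)) \<in> Aloc A"
  unfolding Aloc_def
proof (intro CollectI allI)
  fix z
  obtain \<delta> where "\<delta> > 0" and fin: "finite {m. ball z \<delta> \<inter> ball (t m) (r m) \<noteq> {}}"
    using locally_finite_shrinking_balls[OF assms(2) r] by blast
  define F where "F = {m. P m \<and> ball z \<delta> \<inter> ball (t m) (r m) \<noteq> {}}"
  have "finite F" using fin by (rule rev_finite_subset) (auto simp: F_def)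
  have sum_eq: "(\<Sum>m\<in>{m. P m \<and> x \<in> ball (t m) (r m)}. f m x) = (\<Sum>m\<in>F. f m x)"
    if "x \<in> ball z \<delta>" for x
  proof (rule sum.mono_neutral_left[OF \<open>finite F\<close>])
    show "{m. P m \<and> x \<in> ball (t m) (r m)} \<subseteq> F" using that by (auto simp: F_def)
    show "\<forall>m\<in>F - {m. P m \<and> x \<in> ball (t m) (r m)}. f m x = 0"
      using f0 by (auto simp: F_def)
  qed
  show "\<exists>U. open U \<and> z \<in> U \<and>
      (\<exists>g\<in>A. \<forall>x\<in>U. G (\<Sum>m\<in>{m. P m \<and> x \<in> ball (t m) (r m)}. f m x) = g x)"
  proof (intro exI conjI bexI)
    show "G \<circ> (\<lambda>x. \<Sum>m\<in>F. f m x) \<in> A"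
      by (rule GA[OF adequate_sum[OF assms(1) \<open>finite F\<close> fA]])
    show "\<forall>x\<in>ball z \<delta>. G (\<Sum>m\<in>{m. P m \<and> x \<in> ball (t m) (r m)}. f m x)
        = (G \<circ> (\<lambda>x. \<Sum>m\<in>F. f m x)) x"
      using sum_eq by simp
  qed (use \<open>\<delta> > 0\<close> in simp_all)
qed

lemma Aloc_b_alternating:
  fixes A :: "('a::metric_space \<Rightarrow> real) set" and t :: "nat \<Rightarrow> 'a"
  assumes "adequate A" and "inj t" and "locally_finite_seq t"
  shows "\<exists>g\<in>Aloc_b A. \<forall>m. g (t m) = (if odd m then 1 else 0)"
proof -
  have "\<forall>m. \<exists>\<epsilon>. \<epsilon> > 0 \<and> (\<forall>j. j \<noteq> m \<longrightarrow> \<epsilon> \<le> dist (t m) (t j))"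
    using locally_finite_seq_isolated[OF assms(2,3)] by blast
  then obtain \<epsilon> where \<epsilon>: "\<forall>m. \<epsilon> m > 0 \<and> (\<forall>j. j \<noteq> m \<longrightarrow> \<epsilon> m \<le> dist (t m) (t j))"
    by (rule choice[THEN exE])
  define r where "r m = min (\<epsilon> m / 2) (1 / Suc m)" for m
  have r: "r m > 0" "r m \<le> 1 / Suc m" "r m < \<epsilon> m" for m
    using \<epsilon>[rule_format, of m] by (auto simp: r_def min_less_iff_disj)
  have "\<forall>m. \<exists>f. f \<in> A \<and> f (t m) = 1 \<and> (\<forall>x. x \<notin> ball (t m) (r m) \<longrightarrow> f x = 0)"
    using adequate_bump[OF assms(1) r(1)] by blast
  then obtain f where f: "\<forall>m. f m \<in> A \<and> f m (t m) = 1 \<and> (\<forall>x. x \<notin> ball (t m) (r m) \<longrightarrow> f m x = 0)"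
    by (rule choice[THEN exE])
  obtain G where G01: "\<And>v. G v \<in> {0..1}" and G0: "G 0 = 0" and G1: "G 1 = 1"
    and GA: "\<And>h. h \<in> A \<Longrightarrow> G \<circ> h \<in> A"
    using adequate_truncation[OF assms(1)] by blast
  define g where "g x = G (\<Sum>m\<in>{m. odd m \<and> x \<in> ball (t m) (r m)}. f m x)" for x
  have "g \<in> Aloc A"
    unfolding g_def using f GA
    by (intro Aloc_locally_finite_sum[OF assms(1,3) r(2)]) auto
  moreover have "bounded (range g)"
    using G01 by (intro bounded_subset[OF bounded_closed_interval[of 0 1]]) (auto simp: g_def)
  moreover have "g (t j) = (if odd j then 1 else 0)" for j
  proof -
    have "t j \<notin> ball (t m) (r m)" if "m \<noteq> j" for m
      using \<epsilon> r(3)[of m] that by (auto simp: not_less intro: order.trans[OF less_imp_le])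
    then have "t j \<in> ball (t m) (r m) \<longleftrightarrow> m = j" for m
      using r(1)[of j] by (cases "m = j") auto
    then have "{m. odd m \<and> t j \<in> ball (t m) (r m)} = {m. odd m \<and> m = j}" by simp
    also have "\<dots> = (if odd j then {j} else {})" by auto
    finally have "{m. odd m \<and> t j \<in> ball (t m) (r m)} = (if odd j then {j} else {})" .
    then show ?thesis using f G0 G1 by (simp add: g_def)
  qed
  ultimately show ?thesis unfolding Aloc_b_def by blast
qed

lemma alternating_function_on_subseq:
  fixes A :: "('a::metric_space \<Rightarrow> real) set" and y :: "nat \<Rightarrow> 'a"
  assumes "adequate A"
    and cond: "(A = Aloc A \<or> A = Aloc_b A) \<or>
         (complete (UNIV :: 'a set) \<and>
          (\<forall>y. separated_seq y \<longrightarrow> (\<exists>g\<in>A. \<forall>n. g (y (2*n+1)) = 1 \<and> g (y (2*n)) = 0)))"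
    and "locally_finite_seq y"
  obtains s :: "nat \<Rightarrow> nat" and g where "inj s" "g \<in> A"
    "\<And>n. g (y (s (2*n+1))) = 1" "\<And>n. g (y (s (2*n))) = 0"
  using cond
proof
  assume local: "A = Aloc A \<or> A = Aloc_b A"
  obtain s :: "nat \<Rightarrow> nat" where "inj s" "inj (y \<circ> s)"
    using locally_finite_seq_inj_subseq[OF assms(3)] by blast
  moreover obtain g where "g \<in> Aloc_b A" and g: "\<forall>m. g (y (s m)) = (if odd m then 1 else 0)"
    using Aloc_b_alternating[OF assms(1) \<open>inj (y \<circ> s)\<close> locally_finite_seq_reindex[OF assms(3) \<open>inj s\<close>]]
    by auto
  moreover have "g \<in> A" using local \<open>g \<in> Aloc_b A\<close> unfolding Aloc_b_def by blast
  ultimately show thesis using that by simp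
next
  assume "complete (UNIV :: 'a set) \<and>
      (\<forall>y. separated_seq y \<longrightarrow> (\<exists>g\<in>A. \<forall>n. g (y (2*n+1)) = 1 \<and> g (y (2*n)) = 0))"
  then have "complete (UNIV :: 'a set)"
    and sep: "\<forall>y. separated_seq y \<longrightarrow> (\<exists>g\<in>A. \<forall>n. g (y (2*n+1)) = 1 \<and> g (y (2*n)) = 0)"
    by blast+
  obtain s :: "nat \<Rightarrow> nat" where "inj s" "separated_seq (y \<circ> s)"
    using locally_finite_seq_separated_subseq[OF \<open>complete UNIV\<close> assms(3)] by blast
  then show thesis using sep that by fastforce
qed

section \<open>Points of the remainder\<close>

lemma locally_finite_seq_if_limit_not_evalmap:
  fixes A :: "('a::metric_space \<Rightarrow> real) set"
  assumes "adequate A" and lim: "limitin (Acomp A) (\<lambda>n. evalmap A (y n)) p sequentially"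
    and not_evalmap: "p \<notin> range (evalmap A)"
  shows "locally_finite_seq y"
  unfolding locally_finite_seq_def
proof (rule ccontr)
  assume "\<not> (\<forall>z. \<exists>\<delta>>0. finite {n. y n \<in> ball z \<delta>})"
  then obtain z where cluster: "\<And>\<delta>. \<delta> > 0 \<Longrightarrow> infinite {n. y n \<in> ball z \<delta>}" by blast
  have "p \<in> topspace (Acomp A)" using lim unfolding limitin_def by blast
  have "p = evalmap A z"
  proof (rule Acomp_eq_evalmap_if_in_closure_balls)
    fix \<delta> :: real assume "\<delta> > 0"
    show "p \<in> Acomp A closure_of (evalmap A ` ball z \<delta>)"
      unfolding in_closure_of
    proof (intro conjI allI impI)
      fix U assume "p \<in> U \<and> openin (Acomp A) U"
      then obtain N where "\<And>n. n \<ge> N \<Longrightarrow> evalmap A (y n) \<in> U"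
        using lim unfolding limitin_def eventually_sequentially by blast
      moreover obtain n where "n \<ge> N" "y n \<in> ball z \<delta>"
        using cluster[OF \<open>\<delta> > 0\<close>] unfolding infinite_nat_iff_unbounded_le by blast
      ultimately show "\<exists>q. q \<in> evalmap A ` ball z \<delta> \<and> q \<in> U" by blast
    qed fact
  qed (use adequate_continuous[OF assms(1)] \<open>p \<in> topspace (Acomp A)\<close> in auto)
  then show False using not_evalmap by blast
qed

lemma closed_nbhd_nest_imp_evalmap:
  fixes A :: "('a::metric_space \<Rightarrow> real) set"
  assumes "adequate A"
    and cond: "(A = Aloc A \<or> A = Aloc_b A) \<or>
         (complete (UNIV :: 'a set) \<and>
          (\<forall>y. separated_seq y \<longrightarrow> (\<exists>g\<in>A. \<forall>n. g (y (2*n+1)) = 1 \<and> g (y (2*n)) = 0)))"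
    and "closed_nbhd_nest (Acomp A) p"
  shows "p \<in> range (evalmap A)"
proof (rule ccontr)
  assume not_evalmap: "p \<notin> range (evalmap A)"
  obtain C where "decseq C" and C: "\<And>n. closedin (Acomp A) (C n)" "\<And>n. p \<in> Acomp A interior_of C n"
    and unique: "\<And>r. r \<in> topspace (Acomp A) \<Longrightarrow> \<forall>n. r \<in> C n \<Longrightarrow> r = p"
    using assms(3) unfolding closed_nbhd_nest_def by blast
  have "\<forall>n. \<exists>x. evalmap A x \<in> Acomp A interior_of C n"
    using Acomp_evalmap_dense[OF openin_interior_of C(2)] by blast
  then obtain y where y: "\<forall>n. evalmap A (y n) \<in> Acomp A interior_of C n"
    by (rule choice[THEN exE])
  have "p \<in> topspace (Acomp A)" using subsetD[OF interior_of_subset_topspace C(2)[of 0]] .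
  then have lim: "limitin (Acomp A) (\<lambda>n. evalmap A (y n)) p sequentially"
  proof (rule limitin_closed_nest[OF compact_space_Acomp C(1) \<open>decseq C\<close>])
    show "r = p" if "r \<in> topspace (Acomp A)" "\<And>n. r \<in> C n" for r
      using unique that by simp
    show "evalmap A (y n) \<in> C n" for n
      using subsetD[OF interior_of_subset y[rule_format]] .
  qed
  have conv: "(\<lambda>n. ereal (\<phi> (y n))) \<longlonglongrightarrow> p \<phi>" if "\<phi> \<in> A" for \<phi>
    using continuous_map_limit[OF continuous_map_Acomp_eval[OF that] lim] that
    by (simp add: o_def evalmap_def)
  have "locally_finite_seq y"
    using locally_finite_seq_if_limit_not_evalmap[OF assms(1) lim not_evalmap] .
  then obtain s :: "nat \<Rightarrow> nat" and g where "inj s" "g \<in> A"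
    and odd: "\<And>n. g (y (s (2*n+1))) = 1" and even: "\<And>n. g (y (s (2*n))) = 0"
    using alternating_function_on_subseq[OF assms(1) cond] by blast
  have "ereal 0 = ereal 1"
    by (rule LIMSEQ_inj_subseq_alternating_eq[OF conv[OF \<open>g \<in> A\<close>] \<open>inj s\<close>])
      (simp_all only: odd even)
  then show False by simp
qed

theorem corollary4p3:
  fixes AX :: "('a::metric_space \<Rightarrow> real) set"
    and AY :: "('b::metric_space \<Rightarrow> real) set"
    and h :: "(('a \<Rightarrow> real) \<Rightarrow> ereal) \<Rightarrow> (('b \<Rightarrow> real) \<Rightarrow> ereal)"
    and x0 :: 'a
  assumes "adequate AX" and "adequate AY"
    and "(AY = Aloc AY \<or> AY = Aloc_b AY) \<or>
         (complete (UNIV :: 'b set) \<and>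
          (\<forall>y. separated_seq y \<longrightarrow>
             (\<exists>g\<in>AY. \<forall>n. g (y (2*n+1)) = 1 \<and> g (y (2*n)) = 0)))"
    and "homeomorphic_map (Acomp AX) (Acomp AY) h"
  shows "h (evalmap AX x0) \<in> evalmap AY ` UNIV"
proof -
  have "closed_nbhd_nest (Acomp AX) (evalmap AX x0)"
    using closed_nbhd_nest_evalmap[OF assms(1)] .
  then have "closed_nbhd_nest (Acomp AY) (h (evalmap AX x0))"
    by (rule homeomorphic_map_closed_nbhd_nest[OF assms(4)])
  then show ?thesis by (rule closed_nbhd_nest_imp_evalmap[OF assms(2,3)])
qed

end
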